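(* Let $K_0,K_1>0$, $\alpha\geq-2$ and $p>1$. Let $F\in\mathcal{C}^2([0,T))$ satisfy $$\ddot F(t)+K_0(1+t)^{-1}\dot F(t)\geq K_1(1+t)^{\alpha}|F(t)|^p\quad\text{for all } t\in[0,T).$$ If $F(0)>0$ and $\dot F(0)>0$, then $T<\infty$, i.e. $F$ blows up in finite time (cannot be extended as such a function to all of $[0,\infty)$). *)

theory Defs
  imports "HOL-Analysis.Analysis"
begin

end

(*
  With X = (1 + t) F', the differential inequality (for alpha >= -2) yields
  (1 + t) X' + (K0 - 1) X >= K1 F^p. The integrating factor (1 + t)^(K0 - 1) keeps X
  positive and then bounded below by some m > 0, so F increases at least like m ln (1 + t).

  Put q = (p + 1) / 2 and choose a with a^2 q = K1 / 4. Once F is large the damping term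
  is absorbed by half of K1 F^p, and psi = X - a F^q can then only cross zero upwards.
  If psi stays positive, F' >= a F^q / (1 + t) makes F^(1 - q) + (q - 1) a ln (1 + t)
  decrease, which is impossible since F^(1 - q) > 0 and ln (1 + t) is unbounded.
  Otherwise psi <= 0 for all large t; then the energy X^2 - K1 / (p + 1) F^(p + 1) is
  nondecreasing, and together with X^2 <= a^2 F^(p + 1) this bounds F.
*)

theory Submission
  imports Defs
begin

lemma DERIV_fun_powr_within:
  fixes g :: "real \<Rightarrow> real"
  assumes "(g has_real_derivative m) (at t within S)" and "g t > 0"
  shows "((\<lambda>x. g x powr r) has_real_derivative r * g t powr (r - 1) * m) (at t within S)"
  using DERIV_chain2[OF has_real_derivative_powr[OF assms(2)] assms(1)] by simp

lemma at_within_atLeast_0_eq_at: "(t::real) > 0 \<Longrightarrow> at t within {0..} = at t"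
  by (rule at_within_interior) auto

lemma continuous_on_atLeast_0_if_deriv:
  assumes "\<And>t. t \<ge> 0 \<Longrightarrow> (g has_real_derivative g' t) (at t within {0..})"
  shows "continuous_on {0..} g"
  unfolding continuous_on_eq_continuous_within using assms by (auto intro: DERIV_continuous)

lemma deriv_nonneg_imp_increasing_atLeast_0:
  fixes g g' :: "real \<Rightarrow> real"
  assumes deriv: "\<And>t. t \<ge> 0 \<Longrightarrow> (g has_real_derivative g' t) (at t within {0..})"
    and nonneg: "\<And>t. t \<ge> a \<Longrightarrow> g' t \<ge> 0" and "0 \<le> a" "a \<le> b"
  shows "g a \<le> g b"
proof (rule DERIV_nonneg_imp_increasing_open[OF \<open>a \<le> b\<close>])
  fix x assume "a < x" "x < b"
  with \<open>0 \<le> a\<close> show "\<exists>y. DERIV g x :> y \<and> y \<ge> 0"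
    using deriv[of x] nonneg[of x] at_within_atLeast_0_eq_at[of x] by auto
next
  show "continuous_on {a..b} g"
    using continuous_on_atLeast_0_if_deriv[OF deriv] continuous_on_subset \<open>0 \<le> a\<close> by fastforce
qed

lemma integrating_factor_increasing:
  fixes Y Y' :: "real \<Rightarrow> real" and c :: real
  assumes deriv: "\<And>t. t \<ge> 0 \<Longrightarrow> (Y has_real_derivative Y' t) (at t within {0..})"
    and nonneg: "\<And>t. t \<ge> 0 \<Longrightarrow> c * Y t + (1 + t) * Y' t \<ge> 0"
    and "t \<ge> 0"
  shows "Y 0 \<le> (1 + t) powr c * Y t"
proof -
  let ?g' = "\<lambda>t. (1 + t) powr (c - 1) * (c * Y t + (1 + t) * Y' t)"
  have "((\<lambda>t. (1 + t) powr c * Y t) has_real_derivative ?g' s) (at s within {0..})"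
    if "s \<ge> 0" for s
  proof -
    have "(1 + s) powr c = (1 + s) powr (c - 1) * (1 + s)"
      using that powr_add[of "1 + s" "c - 1" 1] by simp
    moreover have "((\<lambda>t. (1 + t) powr c * Y t) has_real_derivative
        c * (1 + s) powr (c - 1) * 1 * Y s + (1 + s) powr c * Y' s) (at s within {0..})"
      using that by (auto intro!: derivative_eq_intros deriv DERIV_fun_powr_within)
    ultimately show ?thesis
      by (simp add: algebra_simps)
  qed
  then have "(1 + 0) powr c * Y 0 \<le> (1 + t) powr c * Y t"
    by (rule deriv_nonneg_imp_increasing_atLeast_0) (use nonneg \<open>t \<ge> 0\<close> in auto)
  then show ?thesis
    by simp
qed

lemma positivity_persists:
  fixes g g' :: "real \<Rightarrow> real"
  assumes deriv: "\<And>t. t \<ge> 0 \<Longrightarrow> (g has_real_derivative g' t) (at t within {0..})"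
    and barrier: "\<And>t. t \<ge> t1 \<Longrightarrow> g t \<le> 0 \<Longrightarrow> g' t > 0"
    and "0 \<le> t1" "g t1 > 0" "t1 \<le> t2"
  shows "g t2 > 0"
proof (rule ccontr)
  assume "\<not> g t2 > 0"
  define S where "S = {t1..t2} \<inter> g -` {..0}"
  have "closed S"
    unfolding S_def using continuous_on_atLeast_0_if_deriv[OF deriv] \<open>0 \<le> t1\<close>
    by (intro continuous_closed_preimage) (auto elim: continuous_on_subset)
  moreover have "t2 \<in> S"
    using \<open>\<not> g t2 > 0\<close> \<open>t1 \<le> t2\<close> unfolding S_def by auto
  moreover have "bdd_below S"
    unfolding S_def by auto
  ultimately have "Inf S \<in> S"
    using closed_contains_Inf by blast
  define s where "s = Inf S"
  have s: "t1 < s" "s \<le> t2" "g s \<le> 0"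
    using \<open>Inf S \<in> S\<close> \<open>g t1 > 0\<close> unfolding s_def S_def by (auto simp: order_le_less)
  then have "DERIV g s :> g' s"
    using deriv[of s] at_within_atLeast_0_eq_at[of s] \<open>0 \<le> t1\<close> by auto
  then obtain d where "d > 0" and d: "\<And>h. h > 0 \<Longrightarrow> h < d \<Longrightarrow> g (s - h) < g s"
    using DERIV_pos_inc_left barrier[of s] s by fastforce
  define h where "h = min (d / 2) ((s - t1) / 2)"
  have h: "0 < h" "h < d" "t1 \<le> s - h"
    using \<open>d > 0\<close> s min.cobounded1[of "d / 2" "(s - t1) / 2"] min.cobounded2[of "d / 2" "(s - t1) / 2"]
    unfolding h_def by auto
  with d s have "s - h \<in> S"
    unfolding S_def by fastforce
  then have "s \<le> s - h"
    unfolding s_def using \<open>bdd_below S\<close> by (rule cInf_lower)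
  with h show False by simp
qed

lemma ln_one_plus_unbounded:
  fixes m M s :: real
  assumes "m > 0"
  shows "\<exists>t\<ge>s. t \<ge> 0 \<and> M \<le> m * ln (1 + t)"
proof -
  define t where "t = max (max s 0) (exp (M / m) - 1)"
  have "M / m \<le> ln (1 + t)"
    unfolding t_def by (subst ln_ge_iff) auto
  then have "M \<le> m * ln (1 + t)"
    using \<open>m > 0\<close> by (simp add: field_simps)
  moreover have "s \<le> t" "0 \<le> t"
    unfolding t_def by auto
  ultimately show ?thesis
    by blast
qed

lemma powr_dominates_smaller_powr:
  fixes b k p q :: real
  assumes "q < p" and "k > 0"
  shows "\<exists>R. \<forall>x\<ge>R. b * x powr q \<le> k * x powr p"
proof (intro exI allI impI)
  fix x
  assume x: "x \<ge> max 1 ((\<bar>b\<bar> / k) powr (1 / (p - q)))"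
  then have "x powr (p - q) \<ge> ((\<bar>b\<bar> / k) powr (1 / (p - q))) powr (p - q)"
    using assms by (intro powr_mono2) auto
  also have "((\<bar>b\<bar> / k) powr (1 / (p - q))) powr (p - q) = \<bar>b\<bar> / k"
    using assms by (simp add: powr_powr)
  finally have "\<bar>b\<bar> \<le> k * x powr (p - q)"
    using \<open>k > 0\<close> by (simp add: field_simps)
  then have "b * x powr q \<le> k * x powr (p - q) * x powr q"
    by (intro mult_right_mono) auto
  also have "\<dots> = k * x powr p"
    using x by (simp add: powr_add[symmetric])
  finally show "b * x powr q \<le> k * x powr p" .
qed

(* The inequality with alpha = -2. *)
locale damped_supersolution =
  fixes F F' F'' :: "real \<Rightarrow> real" and K0 K1 p :: real
  assumes K1_pos: "K1 > 0" and p_gt_1: "p > 1"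
    and F_deriv: "\<And>t. t \<ge> 0 \<Longrightarrow> (F has_real_derivative F' t) (at t within {0..})"
    and F'_deriv: "\<And>t. t \<ge> 0 \<Longrightarrow> (F' has_real_derivative F'' t) (at t within {0..})"
    and supersolution:
      "\<And>t. t \<ge> 0 \<Longrightarrow> K1 / (1 + t)\<^sup>2 * \<bar>F t\<bar> powr p \<le> F'' t + K0 / (1 + t) * F' t"
    and F_0_pos: "F 0 > 0" and F'_0_pos: "F' 0 > 0"
begin

definition X :: "real \<Rightarrow> real" where "X t = (1 + t) * F' t"

definition X' :: "real \<Rightarrow> real" where "X' t = F' t + (1 + t) * F'' t"

lemma X_deriv: "t \<ge> 0 \<Longrightarrow> (X has_real_derivative X' t) (at t within {0..})"
  unfolding X_def[abs_def] X'_def by (auto intro!: derivative_eq_intros F'_deriv)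

lemma X_supersolution: "t \<ge> 0 \<Longrightarrow> K1 * \<bar>F t\<bar> powr p \<le> (K0 - 1) * X t + (1 + t) * X' t"
proof -
  assume "t \<ge> 0"
  have "K1 * \<bar>F t\<bar> powr p = (1 + t)\<^sup>2 * (K1 / (1 + t)\<^sup>2 * \<bar>F t\<bar> powr p)"
    using \<open>t \<ge> 0\<close> by simp
  also have "\<dots> \<le> (1 + t)\<^sup>2 * (F'' t + K0 / (1 + t) * F' t)"
    using supersolution[OF \<open>t \<ge> 0\<close>] by (rule mult_left_mono) simp
  also have "\<dots> = (K0 - 1) * X t + (1 + t) * X' t"
    using \<open>t \<ge> 0\<close> by (simp add: X_def X'_def power2_eq_square field_simps)
  finally show ?thesis .
qed

lemma X_integrating_factor: "t \<ge> 0 \<Longrightarrow> X 0 \<le> (1 + t) powr (K0 - 1) * X t"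
proof (rule integrating_factor_increasing[OF X_deriv])
  show "0 \<le> (K0 - 1) * X s + (1 + s) * X' s" if "s \<ge> 0" for s
    using K1_pos by (intro order_trans[OF _ X_supersolution[OF that]]) simp
qed

lemma X_pos: "t \<ge> 0 \<Longrightarrow> X t > 0"
proof -
  assume "t \<ge> 0"
  then have "X 0 \<le> (1 + t) powr (K0 - 1) * X t"
    by (rule X_integrating_factor)
  moreover have "X 0 > 0"
    using F'_0_pos by (simp add: X_def)
  ultimately have "(1 + t) powr (K0 - 1) * X t > 0"
    by linarith
  then show "X t > 0"
    using \<open>t \<ge> 0\<close> by (simp add: zero_less_mult_iff)
qed

lemma F'_pos: "t \<ge> 0 \<Longrightarrow> F' t > 0"
  using X_pos[of t] by (simp add: X_def zero_less_mult_iff)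

lemma F_mono: "0 \<le> s \<Longrightarrow> s \<le> t \<Longrightarrow> F s \<le> F t"
  by (rule deriv_nonneg_imp_increasing_atLeast_0[OF F_deriv]) (auto intro: F'_pos[THEN less_imp_le])

lemma F_pos: "t \<ge> 0 \<Longrightarrow> F t > 0"
  using F_mono[of 0 t] F_0_pos by simp

lemma X_supersolution':
  "t \<ge> 0 \<Longrightarrow> K1 * F t powr p \<le> (K0 - 1) * X t + (1 + t) * X' t"
  using X_supersolution[of t] F_pos[of t] by simp

lemma X_bounded_below: "\<exists>m>0. \<forall>t\<ge>0. m \<le> X t"
proof (cases "K0 \<le> 1")
  case True
  have "X 0 \<le> X t" if "t \<ge> 0" for t
  proof -
    have "X 0 \<le> (1 + t) powr (K0 - 1) * X t"
      using \<open>t \<ge> 0\<close> by (rule X_integrating_factor)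
    also have "\<dots> \<le> (1 + t) powr 0 * X t"
      using True \<open>t \<ge> 0\<close> X_pos[OF \<open>t \<ge> 0\<close>] by (intro mult_right_mono powr_mono) auto
    also have "\<dots> = X t"
      using \<open>t \<ge> 0\<close> by simp
    finally show ?thesis .
  qed
  then show ?thesis
    using X_pos[of 0] by auto
next
  case False
  define L where "L = K1 * F 0 powr p / (K0 - 1)"
  have "min (X 0) L \<le> X t" if "t \<ge> 0" for t
  proof -
    have "0 \<le> (K0 - 1) * (X s - L) + (1 + s) * X' s" if "s \<ge> 0" for s
    proof -
      have "(K0 - 1) * L \<le> K1 * F s powr p"
        using False K1_pos F_mono[of 0 s] F_0_pos p_gt_1 that
        by (simp add: L_def powr_mono2)
      with X_supersolution'[OF that] show ?thesis
        by (simp add: algebra_simps)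
    qed
    then have "X 0 - L \<le> (1 + t) powr (K0 - 1) * (X t - L)"
      using X_deriv \<open>t \<ge> 0\<close> by (intro integrating_factor_increasing) (auto intro!: derivative_eq_intros)
    moreover have "1 \<le> (1 + t) powr (K0 - 1)"
      using False \<open>t \<ge> 0\<close> by (simp add: ge_one_powr_ge_zero)
    ultimately have "X t \<le> L \<Longrightarrow> X 0 - L \<le> X t - L"
      using mult_right_mono_neg[of 1 "(1 + t) powr (K0 - 1)" "X t - L"] by simp
    then show ?thesis
      by linarith
  qed
  moreover have "min (X 0) L > 0"
    using X_pos[of 0] False K1_pos F_0_pos by (simp add: L_def)
  ultimately show ?thesis
    by blast
qed

lemma F_unbounded: "\<exists>t\<ge>s. t \<ge> 0 \<and> M \<le> F t"
proof -
  obtain m where "m > 0" and m: "\<And>t. t \<ge> 0 \<Longrightarrow> m \<le> X t"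
    using X_bounded_below by blast
  have log_lower_bound: "F 0 + m * ln (1 + t) \<le> F t" if "t \<ge> 0" for t
  proof -
    have deriv: "((\<lambda>t. F t - m * ln (1 + t)) has_real_derivative F' s - m * (1 / (1 + s)))
        (at s within {0..})" if "s \<ge> 0" for s
      using that by (auto intro!: derivative_eq_intros F_deriv)
    have nonneg: "0 \<le> F' s - m * (1 / (1 + s))" if "s \<ge> 0" for s
      using m[OF that] that by (simp add: X_def field_simps)
    have "F 0 - m * ln (1 + 0) \<le> F t - m * ln (1 + t)"
      using deriv_nonneg_imp_increasing_atLeast_0[OF deriv nonneg order_refl \<open>t \<ge> 0\<close>] .
    then show ?thesis
      by simp
  qed
  obtain t where "t \<ge> s" "t \<ge> 0" "M - F 0 \<le> m * ln (1 + t)"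
    using ln_one_plus_unbounded[OF \<open>m > 0\<close>] by blast
  have "M \<le> F t"
    using log_lower_bound[OF \<open>t \<ge> 0\<close>] \<open>M - F 0 \<le> m * ln (1 + t)\<close> by linarith
  with \<open>t \<ge> s\<close> \<open>t \<ge> 0\<close> show ?thesis
    by blast
qed

definition q :: real where "q = (p + 1) / 2"

definition a :: real where "a = sqrt (K1 / (2 * (p + 1)))"

definition psi :: "real \<Rightarrow> real" where "psi t = X t - a * F t powr q"

definition psi' :: "real \<Rightarrow> real" where "psi' t = X' t - a * (q * F t powr (q - 1) * F' t)"

lemma q_gt_1: "q > 1" and q_less_p: "q < p"
  using p_gt_1 by (simp_all add: q_def field_simps)

lemma a_pos: "a > 0"
  using K1_pos p_gt_1 by (simp add: a_def)

lemma a_squared: "a * a = K1 / (2 * (p + 1))"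
  using K1_pos p_gt_1 by (simp add: a_def)

lemma psi_deriv: "t \<ge> 0 \<Longrightarrow> (psi has_real_derivative psi' t) (at t within {0..})"
  unfolding psi_def[abs_def] psi'_def
  by (auto intro!: derivative_eq_intros X_deriv DERIV_fun_powr_within F_deriv F_pos)

lemma psi_deriv_pos:
  assumes "t \<ge> 0" and "psi t \<le> 0" and strong: "K1 / 2 * F t powr p \<le> (1 + t) * X' t"
  shows "psi' t > 0"
proof -
  have "a * q * F t powr (q - 1) * X t \<le> a * q * F t powr (q - 1) * (a * F t powr q)"
    using \<open>psi t \<le> 0\<close> a_pos q_gt_1 by (intro mult_left_mono) (auto simp: psi_def)
  also have "\<dots> = a * a * q * (F t powr (q - 1) * F t powr q)"
    by (simp add: mult_ac)
  also have "\<dots> = K1 / 4 * F t powr p"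
    using F_pos[OF \<open>t \<ge> 0\<close>] p_gt_1 by (simp add: a_squared q_def powr_add[symmetric] field_simps)
  also have "\<dots> < K1 / 2 * F t powr p"
    using K1_pos F_pos[OF \<open>t \<ge> 0\<close>] by simp
  finally have "a * q * F t powr (q - 1) * X t < (1 + t) * X' t"
    using strong by linarith
  then have "(1 + t) * psi' t > 0"
    by (simp add: psi'_def X_def algebra_simps)
  with \<open>t \<ge> 0\<close> show ?thesis
    by (simp add: zero_less_mult_iff)
qed

lemma eventually_strong_supersolution:
  "\<exists>t0\<ge>0. \<forall>t\<ge>t0. psi t \<le> 0 \<longrightarrow> K1 / 2 * F t powr p \<le> (1 + t) * X' t"
proof -
  obtain R where R: "\<And>x. x \<ge> R \<Longrightarrow> \<bar>K0 - 1\<bar> * a * x powr q \<le> K1 / 2 * x powr p"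
    using powr_dominates_smaller_powr[OF q_less_p, of "K1 / 2"] K1_pos by auto
  obtain t0 where "t0 \<ge> 0" "R \<le> F t0"
    using F_unbounded by blast
  have "K1 / 2 * F t powr p \<le> (1 + t) * X' t" if "t \<ge> t0" "psi t \<le> 0" for t
  proof -
    have "t \<ge> 0"
      using that \<open>t0 \<ge> 0\<close> by simp
    have "(K0 - 1) * X t \<le> \<bar>K0 - 1\<bar> * X t"
      using X_pos[OF \<open>t \<ge> 0\<close>] by (intro mult_right_mono) auto
    also have "\<dots> \<le> \<bar>K0 - 1\<bar> * (a * F t powr q)"
      using \<open>psi t \<le> 0\<close> by (intro mult_left_mono) (auto simp: psi_def)
    also have "\<dots> \<le> K1 / 2 * F t powr p"
      using R[of "F t"] F_mono[of t0 t] \<open>R \<le> F t0\<close> \<open>t0 \<ge> 0\<close> that by (simp add: mult_ac)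
    finally show ?thesis
      using X_supersolution'[OF \<open>t \<ge> 0\<close>] by simp
  qed
  with \<open>t0 \<ge> 0\<close> show ?thesis
    by blast
qed

lemma not_eventually_psi_pos:
  assumes "t1 \<ge> 0" and psi_pos: "\<And>t. t \<ge> t1 \<Longrightarrow> psi t > 0"
  shows False
proof -
  define H where "H t = - (F t powr (1 - q) + (q - 1) * a * ln (1 + t))" for t
  define H' where "H' t = - ((1 - q) * F t powr (1 - q - 1) * F' t + (q - 1) * a * (1 / (1 + t)))"
    for t
  have H_deriv: "(H has_real_derivative H' t) (at t within {0..})" if "t \<ge> 0" for t
    unfolding H_def[abs_def] H'_def using that
    by (auto intro!: derivative_eq_intros DERIV_fun_powr_within F_deriv F_pos)
  have H'_nonneg: "H' t \<ge> 0" if "t \<ge> t1" for t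
  proof -
    have "t \<ge> 0"
      using that \<open>t1 \<ge> 0\<close> by simp
    have "a = F t powr (- q) * (a * F t powr q)"
      using F_pos[OF \<open>t \<ge> 0\<close>] by (simp add: powr_minus field_simps)
    also have "\<dots> \<le> F t powr (- q) * X t"
      using psi_pos[OF that] by (intro mult_left_mono) (auto simp: psi_def)
    finally have "(q - 1) * a \<le> (q - 1) * (F t powr (1 - q - 1) * X t)"
      using q_gt_1 by (intro mult_left_mono) auto
    moreover have "(1 + t) * H' t = (q - 1) * (F t powr (1 - q - 1) * X t) - (q - 1) * a"
      using \<open>t \<ge> 0\<close> by (simp add: H'_def X_def field_simps)
    ultimately have "(1 + t) * H' t \<ge> 0"
      by simp
    with \<open>t \<ge> 0\<close> show ?thesis
      by (simp add: zero_le_mult_iff)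
  qed
  have "(q - 1) * a * ln (1 + t) < - H t1" if "t \<ge> t1" for t
  proof -
    have "H t1 \<le> H t"
      using H_deriv H'_nonneg \<open>t1 \<ge> 0\<close> that by (rule deriv_nonneg_imp_increasing_atLeast_0)
    moreover have "0 < F t powr (1 - q)"
      using F_pos[of t] that \<open>t1 \<ge> 0\<close> by simp
    ultimately show ?thesis
      unfolding H_def by linarith
  qed
  moreover obtain t where "t \<ge> t1" "- H t1 \<le> (q - 1) * a * ln (1 + t)"
    using ln_one_plus_unbounded[of "(q - 1) * a"] q_gt_1 a_pos by fastforce
  ultimately show False
    by fastforce
qed

lemma not_eventually_psi_nonpos:
  assumes "t0 \<ge> 0" and psi_nonpos: "\<And>t. t \<ge> t0 \<Longrightarrow> psi t \<le> 0"
    and strong: "\<And>t. t \<ge> t0 \<Longrightarrow> K1 / 2 * F t powr p \<le> (1 + t) * X' t"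
  shows False
proof -
  define E where "E t = (X t)\<^sup>2 - K1 / (p + 1) * F t powr (p + 1)" for t
  define E' where "E' t = 2 * X t * X' t - K1 / (p + 1) * ((p + 1) * F t powr (p + 1 - 1) * F' t)"
    for t
  have "(E has_real_derivative E' t) (at t within {0..})" if "t \<ge> 0" for t
    unfolding E_def[abs_def] E'_def using that
    by (auto intro!: derivative_eq_intros X_deriv DERIV_fun_powr_within F_deriv F_pos)
  moreover have "E' t \<ge> 0" if "t \<ge> t0" for t
  proof -
    have "t \<ge> 0"
      using that \<open>t0 \<ge> 0\<close> by simp
    have "K1 * F t powr p * X t \<le> 2 * X t * ((1 + t) * X' t)"
      using strong[OF that] X_pos[OF \<open>t \<ge> 0\<close>] mult_left_mono[of _ _ "2 * X t"] by fastforce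
    moreover have "(1 + t) * E' t = 2 * X t * ((1 + t) * X' t) - K1 * F t powr p * X t"
      using p_gt_1 by (simp add: E'_def X_def field_simps)
    ultimately have "(1 + t) * E' t \<ge> 0"
      by simp
    with \<open>t \<ge> 0\<close> show ?thesis
      by (simp add: zero_le_mult_iff)
  qed
  ultimately have E_increasing: "E t0 \<le> E t" if "t \<ge> t0" for t
    using deriv_nonneg_imp_increasing_atLeast_0[of E E' t0 t] \<open>t0 \<ge> 0\<close> that by blast
  have bounded: "F t powr (p + 1) \<le> 2 * F t0 powr (p + 1)" if "t \<ge> t0" for t
  proof -
    have "(X t)\<^sup>2 \<le> (a * F t powr q)\<^sup>2"
      using psi_nonpos[OF that] X_pos[of t] that \<open>t0 \<ge> 0\<close> by (intro power_mono) (auto simp: psi_def)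
    also have "\<dots> = a * a * (F t powr q * F t powr q)"
      by (simp add: power2_eq_square mult_ac)
    also have "\<dots> = K1 / (2 * (p + 1)) * F t powr (p + 1)"
      using F_pos[of t] that \<open>t0 \<ge> 0\<close> by (simp add: a_squared q_def powr_add[symmetric])
    finally have "(X t)\<^sup>2 \<le> K1 / (p + 1) * (F t powr (p + 1) / 2)"
      by (simp add: field_simps)
    moreover have "K1 / (p + 1) * (F t powr (p + 1) - F t0 powr (p + 1)) \<le> (X t)\<^sup>2"
      using E_increasing[OF that] zero_le_power2[of "X t0"] unfolding E_def right_diff_distrib
      by linarith
    ultimately have "K1 / (p + 1) * (F t powr (p + 1) - F t0 powr (p + 1))
        \<le> K1 / (p + 1) * (F t powr (p + 1) / 2)"
      by linarith
    moreover have "K1 / (p + 1) > 0"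
      using K1_pos p_gt_1 by simp
    ultimately have "F t powr (p + 1) - F t0 powr (p + 1) \<le> F t powr (p + 1) / 2"
      by (rule mult_left_le_imp_le)
    then show ?thesis
      by simp
  qed
  obtain t where "t \<ge> t0" "2 * F t0 \<le> F t"
    using F_unbounded by blast
  have "2 powr 1 < 2 powr (p + 1)"
    using p_gt_1 by (intro powr_less_mono) auto
  then have "2 * F t0 powr (p + 1) < 2 powr (p + 1) * F t0 powr (p + 1)"
    using F_pos[OF \<open>t0 \<ge> 0\<close>] by (intro mult_strict_right_mono) auto
  also have "\<dots> \<le> F t powr (p + 1)"
    using F_pos[OF \<open>t0 \<ge> 0\<close>] \<open>2 * F t0 \<le> F t\<close> p_gt_1 by (simp add: powr_mult[symmetric] powr_mono2)
  finally show False
    using bounded[OF \<open>t \<ge> t0\<close>] by simp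
qed

theorem no_global_solution: False
proof -
  obtain t0 where "t0 \<ge> 0" and strong: "\<And>t. t \<ge> t0 \<Longrightarrow> psi t \<le> 0 \<Longrightarrow>
      K1 / 2 * F t powr p \<le> (1 + t) * X' t"
    using eventually_strong_supersolution by blast
  show False
  proof (cases "\<exists>t1\<ge>t0. psi t1 > 0")
    case True
    then obtain t1 where "t1 \<ge> t0" "psi t1 > 0"
      by blast
    have "psi t > 0" if "t \<ge> t1" for t
      using positivity_persists[OF psi_deriv _ _ \<open>psi t1 > 0\<close> that] psi_deriv_pos strong
        \<open>t1 \<ge> t0\<close> \<open>t0 \<ge> 0\<close> by force
    with \<open>t1 \<ge> t0\<close> \<open>t0 \<ge> 0\<close> show False
      using not_eventually_psi_pos[of t1] by simp
  next
    case False
    with \<open>t0 \<ge> 0\<close> strong show False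
      by (intro not_eventually_psi_nonpos) force+
  qed
qed

end

theorem lemma7p1:
  fixes F F' F'' :: "real \<Rightarrow> real" and K0 K1 \<alpha> p :: real
  assumes "K0 > 0" and "K1 > 0" and "\<alpha> \<ge> -2" and "p > 1"
    and "\<And>t. t \<ge> 0 \<Longrightarrow> (F has_real_derivative F' t) (at t within {0..})"
    and "\<And>t. t \<ge> 0 \<Longrightarrow> (F' has_real_derivative F'' t) (at t within {0..})"
    and "continuous_on {0..} F''"
    and "\<And>t. t \<ge> 0 \<Longrightarrow>
           F'' t + K0 * (1 + t) powr (-1) * F' t \<ge> K1 * (1 + t) powr \<alpha> * \<bar>F t\<bar> powr p"
    and "F 0 > 0" and "F' 0 > 0"
  shows False
proof -
  have weakened: "K1 / (1 + t)\<^sup>2 * \<bar>F t\<bar> powr p \<le> F'' t + K0 / (1 + t) * F' t"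
    if "t \<ge> 0" for t
  proof -
    have "K1 / (1 + t)\<^sup>2 = K1 * (1 + t) powr (-2)"
      using that by (simp add: powr_minus_divide powr_realpow)
    also have "\<dots> \<le> K1 * (1 + t) powr \<alpha>"
      using \<open>\<alpha> \<ge> -2\<close> \<open>K1 > 0\<close> that by (intro mult_left_mono powr_mono) auto
    finally have "K1 / (1 + t)\<^sup>2 * \<bar>F t\<bar> powr p \<le> K1 * (1 + t) powr \<alpha> * \<bar>F t\<bar> powr p"
      by (rule mult_right_mono) simp
    also have "\<dots> \<le> F'' t + K0 / (1 + t) * F' t"
      using assms(8)[OF that] that by (simp add: powr_minus_divide)
    finally show ?thesis .
  qed
  interpret damped_supersolution F F' F'' K0 K1 p
    using assms(2,4,5,6,9,10) weakened by unfold_locales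
  show False
    by (rule no_global_solution)
qed

end
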